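(* With the setting in the context, for $[f]\in H^0(C,G)$ define $$Q^{[f]}=\frac{1}{|\widehat{H^0(C,G)}|}\sum_{\rho\in\widehat{H^0(C,G)}}\overline{\rho([f])}\,Q_{m_\rho}.$$ Then for every $g\in\ker(\delta^0)$, $Q^{[f]}\mathcal A_0|g\rangle=\delta([f],[g])\,\mathcal A_0|g\rangle$, where $\delta(\cdot,\cdot)$ is the Kronecker delta on $H^0(C,G)$.
   Context: $(C_\bullet,\partial^C_\bullet)$ is a chain complex with each $C_n$ free abelian on a finite set $K_n$, $K_n\ne\emptyset$ for finitely many $n$; $(G_\bullet,\partial^G_\bullet)$ is a chain complex of finite abelian groups. $\mathrm{hom}(C,G)^p=\prod_n\mathrm{Hom}(C_n,G_{n-p})$ with $(\delta^pf)_n=f_{n-1}\partial^C_n-(-1)^p\partial^G_{n-p}f_n$, and $H^0(C,G)=\ker\delta^0/\mathrm{im}\,\delta^{-1}$, with character group $\widehat{H^0(C,G)}=\mathrm{Hom}(H^0(C,G),U(1))$. $\mathrm{hom}(C,G)_0=\mathrm{Hom}(\mathrm{hom}(C,G)^0,U(1))$. $\mathcal H=\bigotimes_n\bigotimes_{x\in K_n}\mathbb C[G_n]$ with orthonormal basis $|f\rangle$, $f\in\mathrm{hom}(C,G)^0$; $Q_m|f\rangle=m(f)|f\rangle$ for $m\in\mathrm{hom}(C,G)_0$; $P_t|f\rangle=|f+t\rangle$; $\mathcal A_0=\frac1{|\mathrm{hom}(C,G)^{-1}|}\sum_{t\in\mathrm{hom}(C,G)^{-1}}P_{\delta^{-1}t}$.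 For each $\rho\in\widehat{H^0(C,G)}$, $m_\rho\in\mathrm{hom}(C,G)_0$ denotes any character with $m_\rho\circ\delta^{-1}$ trivial and $m_\rho(f)=\rho([f])$ for all $f\in\ker\delta^0$ (such characters exist, and $Q_{m_\rho}$ restricted to the span of the vectors $\mathcal A_0|g\rangle$, $g\in\ker\delta^0$, does not depend on the choice). *)

theory Defs
  imports Complex_Main
begin

text \<open>Cochains in degree p: an element of hom(C,G)^p = prod_n Hom(C_n, G_(n-p)).
  Since C_n is free abelian on the finite set K n, a homomorphism C_n -> G_(n-p) is
  the same as a function K n -> G (n-p).  All groups G_n are subgroups (carriers) of a
  common ambient abelian group of type 'g.  Cochains are represented extensionally
  (value 0 outside K n).\<close>

type_synonym ('c, 'g) cochain = "int \<Rightarrow> 'c \<Rightarrow> 'g"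

fun nmul :: "nat \<Rightarrow> 'g::ab_group_add \<Rightarrow> 'g" where
  "nmul 0 a = 0"
| "nmul (Suc k) a = a + nmul k a"

definition zmul :: "int \<Rightarrow> 'g::ab_group_add \<Rightarrow> 'g" where
  "zmul k a = (if 0 \<le> k then nmul (nat k) a else - nmul (nat (- k)) a)"

definition cochains :: "(int \<Rightarrow> 'c set) \<Rightarrow> (int \<Rightarrow> 'g::zero set) \<Rightarrow> int \<Rightarrow> ('c, 'g) cochain set" where
  "cochains K G p = {f. \<forall>n x. (x \<in> K n \<longrightarrow> f n x \<in> G (n - p)) \<and> (x \<notin> K n \<longrightarrow> f n x = 0)}"

definition cadd :: "('c, 'g::ab_group_add) cochain \<Rightarrow> ('c, 'g) cochain \<Rightarrow> ('c, 'g) cochain" where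
  "cadd f t = (\<lambda>n x. f n x + t n x)"

definition csub :: "('c, 'g::ab_group_add) cochain \<Rightarrow> ('c, 'g) cochain \<Rightarrow> ('c, 'g) cochain" where
  "csub f t = (\<lambda>n x. f n x - t n x)"

text \<open>The boundary of C: for x in K n, \<partial>x = sum over y in K (n-1) of dC n x y * y.
  Coboundary: (delta p f)_n = f_(n-1) \<circ> \<partial>^C_n - (-1)^p \<partial>^G_(n-p) \<circ> f_n.\<close>
definition delta :: "(int \<Rightarrow> 'c set) \<Rightarrow> (int \<Rightarrow> 'c \<Rightarrow> 'c \<Rightarrow> int) \<Rightarrow> (int \<Rightarrow> 'g \<Rightarrow> 'g)
    \<Rightarrow> int \<Rightarrow> ('c, 'g::ab_group_add) cochain \<Rightarrow> ('c, 'g) cochain" where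
  "delta K dC dG p f = (\<lambda>n x. if x \<in> K n then
      (\<Sum>y\<in>K (n - 1). zmul (dC n x y) (f (n - 1) y))
      - (if even p then dG (n - p) (f n x) else - dG (n - p) (f n x))
    else 0)"

definition cocycles0 where
  "cocycles0 K dC G dG = {f \<in> cochains K G 0. delta K dC dG 0 f = (\<lambda>n x. 0)}"

definition coboundaries0 where
  "coboundaries0 K dC G dG = delta K dC dG (-1) ` cochains K G (-1)"

definition cls where
  "cls K dC G dG f = {cadd f b | b. b \<in> coboundaries0 K dC G dG}"

definition H0 where
  "H0 K dC G dG = cls K dC G dG ` cocycles0 K dC G dG"

text \<open>Character group of H^0: homomorphisms H^0 -> U(1), as functions on the set of
  classes, extended by 0 outside H^0.  The group law of H^0 is [a]+[b] = [a+b].\<close>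
definition H0_chars :: "(int \<Rightarrow> 'c set) \<Rightarrow> (int \<Rightarrow> 'c \<Rightarrow> 'c \<Rightarrow> int) \<Rightarrow> (int \<Rightarrow> 'g::ab_group_add set)
    \<Rightarrow> (int \<Rightarrow> 'g \<Rightarrow> 'g) \<Rightarrow> (('c, 'g) cochain set \<Rightarrow> complex) set" where
  "H0_chars K dC G dG = {\<rho>. (\<forall>X. X \<notin> H0 K dC G dG \<longrightarrow> \<rho> X = 0)
     \<and> (\<forall>a\<in>cocycles0 K dC G dG. \<forall>b\<in>cocycles0 K dC G dG.
          \<rho> (cls K dC G dG (cadd a b)) = \<rho> (cls K dC G dG a) * \<rho> (cls K dC G dG b))
     \<and> (\<forall>a\<in>cocycles0 K dC G dG. norm (\<rho> (cls K dC G dG a)) = 1)}"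

definition hom0_chars :: "(int \<Rightarrow> 'c set) \<Rightarrow> (int \<Rightarrow> 'g::ab_group_add set)
    \<Rightarrow> (('c, 'g) cochain \<Rightarrow> complex) set" where
  "hom0_chars K G = {m. (\<forall>a\<in>cochains K G 0. \<forall>b\<in>cochains K G 0. m (cadd a b) = m a * m b)
     \<and> (\<forall>a\<in>cochains K G 0. norm (m a) = 1)}"

text \<open>Vectors of H = functions hom(C,G)^0 -> C (coefficients in the basis |f>).\<close>
definition ket :: "('c, 'g) cochain \<Rightarrow> ('c, 'g) cochain \<Rightarrow> complex" where
  "ket f = (\<lambda>h. if h = f then 1 else 0)"

definition Qop :: "(('c, 'g) cochain \<Rightarrow> complex) \<Rightarrow> (('c, 'g) cochain \<Rightarrow> complex) \<Rightarrow> ('c, 'g) cochain \<Rightarrow> complex" where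
  "Qop m \<psi> = (\<lambda>h. m h * \<psi> h)"

text \<open>P_t |f> = |f + t>.\<close>
definition Pop :: "('c, 'g::ab_group_add) cochain \<Rightarrow> (('c, 'g) cochain \<Rightarrow> complex) \<Rightarrow> ('c, 'g) cochain \<Rightarrow> complex" where
  "Pop t \<psi> = (\<lambda>h. \<psi> (csub h t))"

definition A0 where
  "A0 K dC G dG \<psi> = (\<lambda>h. (\<Sum>t\<in>cochains K G (-1). Pop (delta K dC dG (-1) t) \<psi> h)
                          / of_nat (card (cochains K G (-1))))"

definition Qclass where
  "Qclass K dC G dG mrho f \<psi> = (\<lambda>h. (\<Sum>\<rho>\<in>H0_chars K dC G dG.
        cnj (\<rho> (cls K dC G dG f)) * Qop (mrho \<rho>) \<psi> h)
      / of_nat (card (H0_chars K dC G dG)))"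

end

(* A_0|g> is supported on the coset g + B^0 of coboundaries, and on that coset every Q_(m_rho)
   acts as the scalar rho([g]).  Hence Q^[f] A_0|g> equals A_0|g> times the average of
   conj(rho[f]) rho[g] over the characters rho of the finite abelian group H^0, which is the
   orthogonality relation for characters.  Orthogonality comes from the fact that characters
   separate points, proved by extending a character from a subgroup one cyclic generator at a
   time, using that every unit complex number has a k-th root different from 1.
   Classes are treated as cosets of all coboundaries and compared through Z^0 \<inter> B^0. *)

theory Submission
  imports Defs "HOL-Library.Function_Algebras" "HOL-Library.FuncSet"
begin

definition add_subgroup :: "'a::ab_group_add set \<Rightarrow> bool" where
  "add_subgroup H \<longleftrightarrow> 0 \<in> H \<and> (\<forall>x\<in>H. \<forall>y\<in>H. x + y \<in> H) \<and> (\<forall>x\<in>H. - x \<in> H)"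

definition character_on :: "'a::ab_group_add set \<Rightarrow> ('a \<Rightarrow> complex) \<Rightarrow> bool" where
  "character_on H \<chi> \<longleftrightarrow> (\<forall>x\<in>H. \<forall>y\<in>H. \<chi> (x + y) = \<chi> x * \<chi> y) \<and> (\<forall>x\<in>H. norm (\<chi> x) = 1)"

lemma
  assumes "add_subgroup H"
  shows add_subgroup_zero: "0 \<in> H"
    and add_subgroup_add: "x \<in> H \<Longrightarrow> y \<in> H \<Longrightarrow> x + y \<in> H"
    and add_subgroup_uminus: "x \<in> H \<Longrightarrow> - x \<in> H"
    and add_subgroup_diff: "x \<in> H \<Longrightarrow> y \<in> H \<Longrightarrow> x - y \<in> H"
  using assms unfolding add_subgroup_def by (metis diff_conv_add_uminus)+

lemma add_subgroup_Int: "add_subgroup A \<Longrightarrow> add_subgroup B \<Longrightarrow> add_subgroup (A \<inter> B)"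
  unfolding add_subgroup_def by blast

lemma nmul_add: "nmul (i + j) a = nmul i a + nmul j a"
  by (induct i) (simp_all add: add.assoc)

lemma nmul_mult: "nmul (i * j) a = nmul i (nmul j a)"
  by (induct i) (simp_all add: nmul_add)

lemma nmul_zero [simp]: "nmul i 0 = 0"
  by (induct i) simp_all

lemma nmul_plus: "nmul i (a + b) = nmul i a + nmul i b"
  by (induct i) (simp_all add: algebra_simps)

lemma zmul_plus: "zmul k (a + b) = zmul k a + zmul k b"
  by (simp add: zmul_def nmul_plus)

lemma add_subgroup_nmul: "add_subgroup H \<Longrightarrow> a \<in> H \<Longrightarrow> nmul i a \<in> H"
  by (induct i) (auto intro: add_subgroup_zero add_subgroup_add)

lemma add_subgroup_zmul: "add_subgroup H \<Longrightarrow> a \<in> H \<Longrightarrow> zmul k a \<in> H"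
  unfolding zmul_def by (auto intro: add_subgroup_nmul add_subgroup_uminus)

lemma add_subgroup_sum:
  fixes f :: "'b \<Rightarrow> 'a::ab_group_add"
  assumes "add_subgroup H"
    and "\<And>y. y \<in> A \<Longrightarrow> f y \<in> H"
  shows "sum f A \<in> H"
  using assms(2)
proof (induct A rule: infinite_finite_induct)
  case (insert x F)
  then show ?case by (simp add: add_subgroup_add[OF assms(1)])
qed (simp_all add: assms(1) add_subgroup_zero)

lemma additive_on_subgroup:
  fixes h :: "'a::ab_group_add \<Rightarrow> 'b::ab_group_add"
  assumes S: "add_subgroup S" and h: "\<And>a b. a \<in> S \<Longrightarrow> b \<in> S \<Longrightarrow> h (a + b) = h a + h b"
  shows additive_zero: "h 0 = 0"
    and additive_uminus: "a \<in> S \<Longrightarrow> h (- a) = - h a"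
proof -
  show h0: "h 0 = 0" using h[of 0 0] add_subgroup_zero[OF S] by simp
  show "h (- a) = - h a" if "a \<in> S"
    using h[of a "- a"] add_subgroup_uminus[OF S that] that h0
    by (simp add: eq_neg_iff_add_eq_0 add.commute)
qed

lemma add_subgroup_kernel:
  fixes h :: "'a::ab_group_add \<Rightarrow> 'b::ab_group_add"
  assumes S: "add_subgroup S" and h: "\<And>a b. a \<in> S \<Longrightarrow> b \<in> S \<Longrightarrow> h (a + b) = h a + h b"
  shows "add_subgroup {a \<in> S. h a = 0}"
  using additive_on_subgroup[OF S h] S h unfolding add_subgroup_def by auto

lemma add_subgroup_image:
  fixes h :: "'a::ab_group_add \<Rightarrow> 'b::ab_group_add"
  assumes S: "add_subgroup S" and h: "\<And>a b. a \<in> S \<Longrightarrow> b \<in> S \<Longrightarrow> h (a + b) = h a + h b"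
  shows "add_subgroup (h ` S)"
  unfolding add_subgroup_def
proof (intro conjI ballI)
  show "0 \<in> h ` S" using additive_zero[OF S h] add_subgroup_zero[OF S] by force
next
  fix x y assume "x \<in> h ` S" "y \<in> h ` S"
  then obtain a b where "a \<in> S" "b \<in> S" "x = h a" "y = h b" by blast
  then show "x + y \<in> h ` S" using h add_subgroup_add[OF S] by (metis image_eqI)
next
  fix x assume "x \<in> h ` S"
  then obtain a where "a \<in> S" "x = h a" by blast
  then show "- x \<in> h ` S"
    using additive_uminus[OF S h] add_subgroup_uminus[OF S] by (metis image_eqI)
qed

lemma nmul_order_exists:
  assumes "finite H" "add_subgroup H" "a \<in> H"
  shows "\<exists>n>0. nmul n a = 0"
proof -
  have "finite (range (\<lambda>i. nmul i a))"
    using assms by (auto intro: finite_subset add_subgroup_nmul)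
  then have "\<not> inj (\<lambda>i. nmul i a)"
    using finite_imageD by blast
  then obtain i j where "i < j" "nmul i a = nmul j a"
    unfolding inj_def by (metis linorder_neqE_nat)
  then have "nmul (j - i) a + nmul i a = nmul i a"
    by (metis le_add_diff_inverse2 less_imp_le nmul_add)
  then show ?thesis using \<open>i < j\<close> by (intro exI[of _ "j - i"]) simp
qed

lemma character_on_zero: "character_on H \<chi> \<Longrightarrow> 0 \<in> H \<Longrightarrow> \<chi> 0 = 1"
  unfolding character_on_def by (metis add_0 mult_cancel_left1 norm_zero zero_neq_one)

lemma character_on_nmul:
  assumes "character_on H \<chi>" "add_subgroup H" "a \<in> H"
  shows "\<chi> (nmul q a) = \<chi> a ^ q"
proof (induct q)
  case 0 then show ?case using assms character_on_zero add_subgroup_zero by auto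
next
  case (Suc q)
  then show ?case
    using assms add_subgroup_nmul[OF assms(2,3), of q] unfolding character_on_def by simp
qed

lemma finite_characters:
  fixes H :: "'a::ab_group_add set"
  assumes fin: "finite H" and H: "add_subgroup H"
  shows "finite {\<chi> \<in> extensional H. character_on H \<chi>}"
proof -
  define N where "N a = (SOME n. n > 0 \<and> nmul n a = 0)" for a :: 'a
  have N: "N a > 0 \<and> nmul (N a) a = 0" if "a \<in> H" for a
    unfolding N_def by (rule someI_ex) (use nmul_order_exists[OF fin H that] in blast)
  have "\<chi> a ^ N a = 1" if "character_on H \<chi>" "a \<in> H" for \<chi> a
    using N[OF that(2)] character_on_nmul[OF that(1) H that(2)]
      character_on_zero[OF that(1) add_subgroup_zero[OF H]] by metis
  then have "{\<chi> \<in> extensional H. character_on H \<chi>} \<subseteq> PiE H (\<lambda>a. {z. z ^ N a = 1})"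
    by (auto simp: PiE_iff extensional_def)
  moreover have "finite (PiE H (\<lambda>a. {z::complex. z ^ N a = 1}))"
    using fin N by (intro finite_PiE finite_roots_unity) (auto simp: Suc_le_eq)
  ultimately show ?thesis by (rule finite_subset)
qed

lemma exists_root_ne_1:
  assumes k: "k \<ge> 2" and z: "norm z = 1"
  shows "\<exists>w::complex. w ^ k = z \<and> norm w = 1 \<and> w \<noteq> 1"
proof -
  define w0 where "w0 = cis (Arg z / real k)"
  have w0k: "w0 ^ k = z"
    using k rcis_cmod_Arg[of z] z by (simp add: w0_def DeMoivre rcis_def)
  define \<zeta> where "\<zeta> = cis (2 * pi * real 1 / real k)"
  have "bij_betw (\<lambda>j. cis (2 * pi * real j / real k)) {..<k} {z. z ^ k = 1}"
    using k by (intro bij_betw_roots_unity) simp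
  then have inj: "inj_on (\<lambda>j. cis (2 * pi * real j / real k)) {..<k}"
    by (simp add: bij_betw_def)
  have "\<zeta> \<noteq> cis (2 * pi * real 0 / real k)"
    unfolding \<zeta>_def using inj_onD[OF inj, of 1 0] k by auto
  then have \<zeta>_ne_1: "\<zeta> \<noteq> 1" by simp
  have \<zeta>k: "\<zeta> ^ k = 1"
    using k by (simp add: \<zeta>_def DeMoivre)
  show ?thesis
  proof (cases "w0 = 1")
    case True
    then show ?thesis using \<zeta>_ne_1 \<zeta>k w0k
      by (intro exI[of _ "w0 * \<zeta>"]) (simp add: power_mult_distrib \<zeta>_def w0_def)
  next
    case False
    then show ?thesis using w0k by (intro exI[of _ w0]) (simp add: w0_def)
  qed
qed

definition join_cyclic :: "'a::ab_group_add set \<Rightarrow> 'a \<Rightarrow> 'a set" where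
  "join_cyclic H c = {h + nmul j c | h j. h \<in> H}"

lemma character_extend_by_value:
  assumes H: "add_subgroup H" and \<chi>: "character_on H \<chi>" and w: "norm w = 1"
    and compat: "\<And>d. nmul d c \<in> H \<Longrightarrow> \<chi> (nmul d c) = w ^ d"
  shows "\<exists>\<chi>'. character_on (join_cyclic H c) \<chi>' \<and> (\<forall>x\<in>H. \<chi>' x = \<chi> x) \<and> \<chi>' c = w"
proof -
  have mult: "\<chi> (x + y) = \<chi> x * \<chi> y" and norm: "norm (\<chi> x) = 1" if "x \<in> H" "y \<in> H" for x y
    using \<chi> that unfolding character_on_def by auto
  have well_defined_le: "\<chi> h * w ^ j = \<chi> h' * w ^ j'"
    if hH: "h \<in> H" "h' \<in> H" and eq: "h + nmul j c = h' + nmul j' c" and le: "j' \<le> j"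
    for h h' j j'
  proof -
    obtain d where j: "j = d + j'" using le_add_diff_inverse2[OF le] by metis
    then have "h + nmul d c = h'" using eq by (simp add: nmul_add add.assoc[symmetric])
    then have "nmul d c = h' - h" by (simp add: algebra_simps)
    then have "\<chi> h' = \<chi> h * w ^ d"
      using mult[of h "h' - h"] compat[of d] add_subgroup_diff[OF H hH(2,1)] hH by simp
    then show ?thesis by (simp add: j power_add mult.assoc)
  qed
  have well_defined: "\<chi> h * w ^ j = \<chi> h' * w ^ j'"
    if "h \<in> H" "h' \<in> H" "h + nmul j c = h' + nmul j' c" for h h' j j'
    using well_defined_le[OF that] well_defined_le[OF that(2,1) that(3)[symmetric]]
    by (cases "j' \<le> j") auto
  define \<chi>' where "\<chi>' x = (SOME v. \<exists>h j. h \<in> H \<and> x = h + nmul j c \<and> v = \<chi> h * w ^ j)" for x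
  have \<chi>'_eq: "\<chi>' (h + nmul j c) = \<chi> h * w ^ j" if hH: "h \<in> H" for h j
  proof -
    have "\<exists>h1 j1. h1 \<in> H \<and> h + nmul j c = h1 + nmul j1 c \<and> \<chi>' (h + nmul j c) = \<chi> h1 * w ^ j1"
      unfolding \<chi>'_def by (rule someI_ex) (use hH in blast)
    then obtain h1 j1 where
      "h1 \<in> H" "h + nmul j c = h1 + nmul j1 c" "\<chi>' (h + nmul j c) = \<chi> h1 * w ^ j1"
      by blast
    then show ?thesis using well_defined[OF hH] by simp
  qed
  have "character_on (join_cyclic H c) \<chi>'"
    unfolding character_on_def join_cyclic_def
  proof (intro conjI ballI)
    fix x y assume "x \<in> {h + nmul j c | h j. h \<in> H}" "y \<in> {h + nmul j c | h j. h \<in> H}"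
    then obtain h1 j1 h2 j2 where xy: "x = h1 + nmul j1 c" "y = h2 + nmul j2 c" "h1 \<in> H" "h2 \<in> H"
      by blast
    then have "x + y = (h1 + h2) + nmul (j1 + j2) c" by (simp add: nmul_add algebra_simps)
    then have "\<chi>' (x + y) = \<chi> (h1 + h2) * w ^ (j1 + j2)"
      using \<chi>'_eq add_subgroup_add[OF H xy(3,4)] by simp
    then show "\<chi>' (x + y) = \<chi>' x * \<chi>' y"
      using xy \<chi>'_eq mult by (simp add: power_add)
  next
    fix x assume "x \<in> {h + nmul j c | h j. h \<in> H}"
    then show "norm (\<chi>' x) = 1" using \<chi>'_eq norm w by (auto simp: norm_mult norm_power)
  qed
  moreover have "\<forall>x\<in>H. \<chi>' x = \<chi> x" using \<chi>'_eq[of _ 0] by simp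
  moreover have "\<chi>' c = w"
    using \<chi>'_eq[OF add_subgroup_zero[OF H], of 1] character_on_zero[OF \<chi> add_subgroup_zero[OF H]]
    by simp
  ultimately show ?thesis by blast
qed

lemma dvd_if_nmul_mem:
  assumes H: "add_subgroup H" and d: "nmul d c \<in> H" and k: "0 < k" "nmul k c \<in> H"
    and k_min: "\<And>r. 0 < r \<Longrightarrow> r < k \<Longrightarrow> nmul r c \<notin> H"
  shows "k dvd d"
proof -
  have "nmul (d div k * k) c \<in> H"
    using k(2) by (simp add: nmul_mult add_subgroup_nmul[OF H])
  moreover have "nmul d c = nmul (d div k * k) c + nmul (d mod k) c"
    by (metis div_mult_mod_eq nmul_add)
  ultimately have "nmul (d mod k) c \<in> H"
    using d add_subgroup_diff[OF H] by (metis add_diff_cancel_left')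
  then show ?thesis
    using k_min[of "d mod k"] k(1) by (auto simp: dvd_eq_mod_eq_0)
qed

lemma character_extend_cyclic:
  assumes H: "add_subgroup H" and \<chi>: "character_on H \<chi>" and c: "c \<notin> H"
    and n: "n > 0" "nmul n c = 0"
  shows "\<exists>\<chi>'. character_on (join_cyclic H c) \<chi>' \<and> (\<forall>x\<in>H. \<chi>' x = \<chi> x) \<and> \<chi>' c \<noteq> 1"
proof -
  define k where "k = (LEAST k. 0 < k \<and> nmul k c \<in> H)"
  have k: "0 < k \<and> nmul k c \<in> H"
    unfolding k_def by (rule LeastI[of _ n]) (use n add_subgroup_zero[OF H] in simp)
  have k_min: "nmul r c \<notin> H" if "0 < r" "r < k" for r
    using not_less_Least[of r] that unfolding k_def by blast
  have "k \<noteq> 1" using k c by auto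
  then have "k \<ge> 2" using k by linarith
  moreover have "norm (\<chi> (nmul k c)) = 1" using \<chi> k unfolding character_on_def by blast
  ultimately obtain w where w: "w ^ k = \<chi> (nmul k c)" "norm w = 1" "w \<noteq> 1"
    using exists_root_ne_1 by blast
  \<comment> \<open>\<open>w\<close> is a \<open>k\<close>-th root of \<open>\<chi> (k c)\<close>, and the multiples of \<open>c\<close> in \<open>H\<close> are exactly those of \<open>k c\<close>.\<close>
  have "\<chi> (nmul d c) = w ^ d" if d: "nmul d c \<in> H" for d
  proof -
    have "k dvd d" using dvd_if_nmul_mem[OF H d] k k_min by blast
    then obtain q where q: "d = q * k" by (metis dvdE mult.commute)
    then have "\<chi> (nmul d c) = \<chi> (nmul k c) ^ q"
      using character_on_nmul[OF \<chi> H] k by (simp add: nmul_mult)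
    then show ?thesis using q w(1) by (simp add: power_mult mult.commute)
  qed
  then show ?thesis
    using character_extend_by_value[OF H \<chi> w(2)] w(3) by blast
qed

lemma add_subgroup_join_cyclic:
  assumes H: "add_subgroup H" and n: "n > 0" "nmul n c = 0"
  shows "add_subgroup (join_cyclic H c)"
  unfolding add_subgroup_def join_cyclic_def
proof (intro conjI ballI)
  show "0 \<in> {h + nmul j c | h j. h \<in> H}"
    using add_subgroup_zero[OF H] by (intro CollectI exI[of _ 0]) auto
next
  fix x y assume "x \<in> {h + nmul j c | h j. h \<in> H}" "y \<in> {h + nmul j c | h j. h \<in> H}"
  then obtain h1 j1 h2 j2 where "x = h1 + nmul j1 c" "y = h2 + nmul j2 c" "h1 \<in> H" "h2 \<in> H"
    by blast
  then show "x + y \<in> {h + nmul j c | h j. h \<in> H}"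
    by (intro CollectI exI[of _ "h1 + h2"] exI[of _ "j1 + j2"])
      (auto simp: nmul_add algebra_simps add_subgroup_add[OF H])
next
  fix x assume "x \<in> {h + nmul j c | h j. h \<in> H}"
  then obtain h j where x: "x = h + nmul j c" "h \<in> H" by blast
  have "nmul j c + nmul ((n - 1) * j) c = nmul (n * j) c"
    using n(1) by (metis Suc_diff_1 mult_Suc nmul_add)
  also have "\<dots> = 0" using n(2) by (simp add: mult.commute nmul_mult)
  finally have "- nmul j c = nmul ((n - 1) * j) c" by (rule add.inverse_unique)
  then show "- x \<in> {h + nmul j c | h j. h \<in> H}"
    using x add_subgroup_uminus[OF H]
    by (intro CollectI exI[of _ "- h"] exI[of _ "(n - 1) * j"]) auto
qed

lemma
  assumes S: "add_subgroup S" and H: "add_subgroup H" "H \<subseteq> S" and c: "c \<in> S"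
  shows join_cyclic_subset: "join_cyclic H c \<subseteq> S"
    and subset_join_cyclic: "H \<subseteq> join_cyclic H c"
    and generator_in_join_cyclic: "c \<in> join_cyclic H c"
  unfolding join_cyclic_def
proof -
  show "{h + nmul j c | h j. h \<in> H} \<subseteq> S"
    using H(2) c add_subgroup_add[OF S] add_subgroup_nmul[OF S] by blast
  show "H \<subseteq> {h + nmul j c | h j. h \<in> H}"
  proof
    fix x assume "x \<in> H"
    then show "x \<in> {h + nmul j c | h j. h \<in> H}" by (intro CollectI exI[of _ x] exI[of _ 0]) simp
  qed
  show "c \<in> {h + nmul j c | h j. h \<in> H}"
    using add_subgroup_zero[OF H(1)] by (intro CollectI exI[of _ 0] exI[of _ "1::nat"]) simp
qed

lemma character_extend:
  assumes S: "finite S" "add_subgroup S"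
  shows "add_subgroup H \<Longrightarrow> H \<subseteq> S \<Longrightarrow> character_on H \<chi> \<Longrightarrow>
    \<exists>\<chi>'. character_on S \<chi>' \<and> (\<forall>x\<in>H. \<chi>' x = \<chi> x)"
proof (induction "card (S - H)" arbitrary: H \<chi> rule: less_induct)
  case less
  show ?case
  proof (cases "H = S")
    case False
    then obtain c where c: "c \<in> S" "c \<notin> H" using less by blast
    obtain n where n: "n > 0" "nmul n c = 0" using nmul_order_exists[OF S c(1)] by blast
    define H' where "H' = join_cyclic H c"
    obtain \<chi>1 where \<chi>1: "character_on H' \<chi>1" "\<forall>x\<in>H. \<chi>1 x = \<chi> x"
      using character_extend_cyclic[OF less(2,4) c(2) n] unfolding H'_def by blast
    have H': "add_subgroup H'" using add_subgroup_join_cyclic[OF less(2) n] unfolding H'_def .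
    have "H' \<subseteq> S" "H \<subseteq> H'" "c \<in> H'"
      unfolding H'_def using S(2) less(2,3) c(1)
      by (rule join_cyclic_subset subset_join_cyclic generator_in_join_cyclic)+
    then have "card (S - H') < card (S - H)"
      using S(1) c by (intro psubset_card_mono) auto
    with less(1) H' \<open>H' \<subseteq> S\<close> \<chi>1(1) obtain \<chi>2
      where "character_on S \<chi>2" "\<forall>x\<in>H'. \<chi>2 x = \<chi>1 x" by blast
    then show ?thesis using \<chi>1(2) \<open>H \<subseteq> H'\<close> by (intro exI[of _ \<chi>2]) auto
  qed (use less in blast)
qed

lemma character_separates:
  assumes S: "finite S" "add_subgroup S" and B: "add_subgroup B" "B \<subseteq> S"
    and a: "a \<in> S" "a \<notin> B"
  shows "\<exists>\<psi>. character_on S \<psi> \<and> (\<forall>b\<in>B. \<psi> b = 1) \<and> \<psi> a \<noteq> 1"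
proof -
  obtain n where n: "n > 0" "nmul n a = 0" using nmul_order_exists[OF S a(1)] by blast
  define H where "H = join_cyclic B a"
  have "character_on B (\<lambda>_. 1)" unfolding character_on_def by simp
  then obtain \<chi> where \<chi>: "character_on H \<chi>" "\<forall>x\<in>B. \<chi> x = 1" "\<chi> a \<noteq> 1"
    using character_extend_cyclic[OF B(1) _ a(2) n] unfolding H_def by blast
  have "add_subgroup H" using add_subgroup_join_cyclic[OF B(1) n] unfolding H_def .
  moreover have "H \<subseteq> S" "B \<subseteq> H" "a \<in> H"
    unfolding H_def using S(2) B a(1)
    by (rule join_cyclic_subset subset_join_cyclic generator_in_join_cyclic)+
  ultimately obtain \<psi> where "character_on S \<psi>" "\<forall>x\<in>H. \<psi> x = \<chi> x"
    using character_extend[OF S] \<chi>(1) by blast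
  then show ?thesis using \<chi> \<open>B \<subseteq> H\<close> \<open>a \<in> H\<close> by (intro exI[of _ \<psi>]) auto
qed

definition add_coset :: "'a::ab_group_add set \<Rightarrow> 'a \<Rightarrow> 'a set" where
  "add_coset B a = (+) a ` B"

lemma add_coset_subset:
  assumes B: "add_subgroup B" and d: "a' - a \<in> B"
  shows "add_coset B a \<subseteq> add_coset B a'"
proof
  fix z assume "z \<in> add_coset B a"
  then obtain b where b: "b \<in> B" "z = a + b" unfolding add_coset_def by blast
  then have "z = a' + (b - (a' - a))" by simp
  moreover have "b - (a' - a) \<in> B" using add_subgroup_diff[OF B b(1) d] .
  ultimately show "z \<in> add_coset B a'" unfolding add_coset_def by blast
qed

lemma add_coset_eq_iff:
  assumes B: "add_subgroup B"
  shows "add_coset B a = add_coset B a' \<longleftrightarrow> a' - a \<in> B"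
proof
  assume eq: "add_coset B a = add_coset B a'"
  have "a' + 0 \<in> add_coset B a"
    unfolding eq unfolding add_coset_def using add_subgroup_zero[OF B] by (rule imageI)
  then obtain b where "b \<in> B" "a' + 0 = a + b" unfolding add_coset_def by blast
  then show "a' - a \<in> B" by simp
next
  assume d: "a' - a \<in> B"
  moreover have "a - a' \<in> B" using add_subgroup_uminus[OF B d] by simp
  ultimately show "add_coset B a = add_coset B a'" using add_coset_subset[OF B] by blast
qed

text \<open>Characters of \<open>Z / (Z \<inter> B)\<close>, encoded as in \<open>H0_chars\<close>: functions on the cosets of \<open>B\<close>
  that vanish off the cosets of elements of \<open>Z\<close>.\<close>

definition coset_characters :: "'a::ab_group_add set \<Rightarrow> 'a set \<Rightarrow> ('a set \<Rightarrow> complex) set" where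
  "coset_characters Z B = {\<rho>. (\<forall>X. X \<notin> add_coset B ` Z \<longrightarrow> \<rho> X = 0)
     \<and> character_on Z (\<lambda>a. \<rho> (add_coset B a))}"

lemma coset_characters_eqI:
  assumes "\<rho>1 \<in> coset_characters Z B" "\<rho>2 \<in> coset_characters Z B"
    and "\<And>a. a \<in> Z \<Longrightarrow> \<rho>1 (add_coset B a) = \<rho>2 (add_coset B a)"
  shows "\<rho>1 = \<rho>2"
proof
  fix X show "\<rho>1 X = \<rho>2 X"
  proof (cases "X \<in> add_coset B ` Z")
    case False
    then show ?thesis using assms(1,2) by (simp add: coset_characters_def)
  next
    case True
    then obtain a where "a \<in> Z" "X = add_coset B a" by blast
    then show ?thesis using assms(3) by simp
  qed
qed

lemma finite_coset_characters:
  assumes fin: "finite Z" and Z: "add_subgroup Z"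
  shows "finite (coset_characters Z B)"
proof -
  define r where "r \<rho> = restrict (\<lambda>a. \<rho> (add_coset B a)) Z" for \<rho> :: "'a set \<Rightarrow> complex"
  have inj: "inj_on r (coset_characters Z B)"
  proof (rule inj_onI)
    fix \<rho>1 \<rho>2 assume \<rho>: "\<rho>1 \<in> coset_characters Z B" "\<rho>2 \<in> coset_characters Z B" "r \<rho>1 = r \<rho>2"
    have "\<rho>1 (add_coset B a) = \<rho>2 (add_coset B a)" if "a \<in> Z" for a
      using fun_cong[OF \<rho>(3), of a] that by (simp add: r_def)
    then show "\<rho>1 = \<rho>2" using coset_characters_eqI[OF \<rho>(1,2)] by blast
  qed
  have "r ` coset_characters Z B \<subseteq> {\<chi> \<in> extensional Z. character_on Z \<chi>}"
  proof
    fix \<chi> assume "\<chi> \<in> r ` coset_characters Z B"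
    then obtain \<rho> where \<rho>: "\<rho> \<in> coset_characters Z B" "\<chi> = r \<rho>" by blast
    then have "character_on Z (\<lambda>a. \<rho> (add_coset B a))" by (simp add: coset_characters_def)
    then show "\<chi> \<in> {\<chi> \<in> extensional Z. character_on Z \<chi>}"
      using add_subgroup_add[OF Z] by (simp add: \<rho>(2) r_def character_on_def)
  qed
  then have "finite (r ` coset_characters Z B)"
    using finite_characters[OF fin Z] by (rule finite_subset)
  then show ?thesis using inj by (rule finite_imageD)
qed

lemma coset_characters_nonempty:
  assumes "add_subgroup Z"
  shows "coset_characters Z B \<noteq> {}"
proof -
  have "(\<lambda>X. if X \<in> add_coset B ` Z then 1 else 0) \<in> coset_characters Z B"
    using add_subgroup_add[OF assms] by (auto simp: coset_characters_def character_on_def)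
  then show ?thesis by blast
qed

lemma coset_characters_mult:
  assumes "\<rho>0 \<in> coset_characters Z B" "\<rho> \<in> coset_characters Z B"
  shows "(\<lambda>X. \<rho>0 X * \<rho> X) \<in> coset_characters Z B"
  using assms by (auto simp: coset_characters_def character_on_def norm_mult)

lemma coset_characters_separate:
  assumes fin: "finite Z" and Z: "add_subgroup Z" and B: "add_subgroup B"
    and f: "f \<in> Z" and g: "g \<in> Z" and ne: "add_coset B f \<noteq> add_coset B g"
  shows "\<exists>\<rho>\<in>coset_characters Z B. \<rho> (add_coset B f) \<noteq> \<rho> (add_coset B g)"
proof -
  have "g - f \<in> Z" "g - f \<notin> Z \<inter> B"
    using add_subgroup_diff[OF Z g f] ne add_coset_eq_iff[OF B] by auto
  then obtain \<psi> where \<psi>: "character_on Z \<psi>" "\<forall>b\<in>Z \<inter> B. \<psi> b = 1" "\<psi> (g - f) \<noteq> 1"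
    using character_separates[OF fin Z add_subgroup_Int[OF Z B]] by blast
  have mult: "\<psi> (x + y) = \<psi> x * \<psi> y" and norm: "norm (\<psi> x) = 1" if "x \<in> Z" "y \<in> Z" for x y
    using \<psi>(1) that unfolding character_on_def by auto
  \<comment> \<open>\<open>\<psi>\<close> is trivial on \<open>Z \<inter> B\<close>, so it descends to the cosets.\<close>
  define \<rho> where
    "\<rho> X = (if X \<in> add_coset B ` Z then \<psi> (SOME a. a \<in> Z \<and> X = add_coset B a) else 0)" for X
  have \<rho>_coset: "\<rho> (add_coset B a) = \<psi> a" if a: "a \<in> Z" for a
  proof -
    define a' where "a' = (SOME a'. a' \<in> Z \<and> add_coset B a = add_coset B a')"
    have "\<exists>a'. a' \<in> Z \<and> add_coset B a = add_coset B a'" using a by blast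
    then have a': "a' \<in> Z \<and> add_coset B a = add_coset B a'"
      unfolding a'_def by (rule someI_ex)
    then have "a - a' \<in> Z \<inter> B"
      using add_coset_eq_iff[OF B] add_subgroup_diff[OF Z a] add_subgroup_uminus[OF B, of "a' - a"]
      by simp
    then have "\<psi> a = \<psi> a'" using mult[of a' "a - a'"] \<psi>(2) a' by simp
    moreover have "add_coset B a \<in> add_coset B ` Z" using a by (rule imageI)
    ultimately show ?thesis unfolding \<rho>_def a'_def by simp
  qed
  have "character_on Z (\<lambda>a. \<rho> (add_coset B a))"
    using mult norm add_subgroup_add[OF Z] by (simp add: character_on_def \<rho>_coset)
  then have "\<rho> \<in> coset_characters Z B"
    unfolding coset_characters_def by (simp add: \<rho>_def)
  moreover have "\<psi> g = \<psi> f * \<psi> (g - f)" using mult[OF f \<open>g - f \<in> Z\<close>] by simp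
  then have "\<psi> f \<noteq> \<psi> g" using \<psi>(3) norm[OF f f] by auto
  ultimately show ?thesis using \<rho>_coset[OF f] \<rho>_coset[OF g] by (intro bexI[of _ \<rho>]) simp_all
qed

lemma cnj_mult_self_norm_1: "norm (z::complex) = 1 \<Longrightarrow> cnj z * z = 1"
  using complex_norm_square[of z] by (simp add: mult.commute)

lemma coset_characters_orthogonal:
  assumes fin: "finite Z" and Z: "add_subgroup Z" and B: "add_subgroup B"
    and f: "f \<in> Z" and g: "g \<in> Z"
  shows "(\<Sum>\<rho>\<in>coset_characters Z B. cnj (\<rho> (add_coset B f)) * \<rho> (add_coset B g))
    = (if add_coset B f = add_coset B g then of_nat (card (coset_characters Z B)) else 0)"
proof (cases "add_coset B f = add_coset B g")
  case True
  have "cnj (\<rho> (add_coset B g)) * \<rho> (add_coset B g) = 1" if "\<rho> \<in> coset_characters Z B" for \<rho>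
    using that g by (simp add: coset_characters_def character_on_def cnj_mult_self_norm_1)
  then show ?thesis using True by simp
next
  case False
  define X where "X = coset_characters Z B"
  obtain \<rho>0 where \<rho>0: "\<rho>0 \<in> X" "\<rho>0 (add_coset B f) \<noteq> \<rho>0 (add_coset B g)"
    using coset_characters_separate[OF fin Z B f g False] unfolding X_def by blast
  have norm0: "norm (\<rho>0 (add_coset B a)) = 1" if "a \<in> Z" for a
    using \<rho>0(1) that by (simp add: X_def coset_characters_def character_on_def)
  define \<sigma> where "\<sigma> \<rho> = (\<lambda>Y. \<rho>0 Y * \<rho> Y)" for \<rho> :: "'a set \<Rightarrow> complex"
  \<comment> \<open>Multiplication by \<open>\<rho>0\<close> permutes the characters, which scales the sum by \<open>u \<noteq> 1\<close>.\<close>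
  have inj: "inj_on \<sigma> X"
  proof (rule inj_onI)
    fix \<rho>1 \<rho>2 assume \<rho>: "\<rho>1 \<in> X" "\<rho>2 \<in> X" "\<sigma> \<rho>1 = \<sigma> \<rho>2"
    have "\<rho>1 (add_coset B a) = \<rho>2 (add_coset B a)" if "a \<in> Z" for a
    proof -
      have "\<rho>0 (add_coset B a) \<noteq> 0" using norm0[OF that] by auto
      then show ?thesis using fun_cong[OF \<rho>(3), of "add_coset B a"] by (simp add: \<sigma>_def)
    qed
    then show "\<rho>1 = \<rho>2" using coset_characters_eqI \<rho>(1,2) unfolding X_def by blast
  qed
  have "\<sigma> ` X \<subseteq> X"
    using coset_characters_mult[OF \<rho>0(1)[unfolded X_def]] unfolding X_def \<sigma>_def by auto
  then have perm: "\<sigma> ` X = X"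
    using finite_coset_characters[OF fin Z] inj unfolding X_def by (intro endo_inj_surj)
  define T where "T = (\<Sum>\<rho>\<in>X. cnj (\<rho> (add_coset B f)) * \<rho> (add_coset B g))"
  define u where "u = cnj (\<rho>0 (add_coset B f)) * \<rho>0 (add_coset B g)"
  have "T = (\<Sum>\<rho>\<in>\<sigma> ` X. cnj (\<rho> (add_coset B f)) * \<rho> (add_coset B g))"
    unfolding T_def perm ..
  also have "\<dots> = (\<Sum>\<rho>\<in>X. cnj (\<sigma> \<rho> (add_coset B f)) * \<sigma> \<rho> (add_coset B g))"
    by (simp add: sum.reindex[OF inj])
  also have "\<dots> = u * T"
    unfolding T_def \<sigma>_def u_def sum_distrib_left by (simp add: mult_ac)
  finally have "T = u * T" .
  moreover have "u \<noteq> 1"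
  proof
    assume "u = 1"
    have "\<rho>0 (add_coset B g) = cnj (\<rho>0 (add_coset B f)) * \<rho>0 (add_coset B f) * \<rho>0 (add_coset B g)"
      using cnj_mult_self_norm_1[OF norm0[OF f]] by simp
    also have "\<dots> = \<rho>0 (add_coset B f) * u" unfolding u_def by (simp add: mult_ac)
    finally show False using \<open>u = 1\<close> \<rho>0(2) by simp
  qed
  ultimately have "T = 0" by simp
  then show ?thesis using False unfolding T_def X_def by simp
qed

lemma cadd_eq_plus: "cadd f t = f + t"
  by (simp add: cadd_def fun_eq_iff)

lemma csub_eq_minus: "csub f t = f - t"
  by (simp add: csub_def fun_eq_iff)

lemma finite_cochains:
  fixes K :: "int \<Rightarrow> 'c set" and G :: "int \<Rightarrow> 'g::zero set"
  assumes "\<And>n. finite (K n)" "finite {n. K n \<noteq> {}}" "\<And>n. finite (G n)"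
  shows "finite (cochains K G p)"
proof -
  define I where "I = Sigma {n. K n \<noteq> {}} K"
  define r where "r f = restrict (\<lambda>(n, x). f n x) I" for f :: "('c, 'g) cochain"
  have "inj_on r (cochains K G p)"
  proof (rule inj_onI, intro ext)
    fix f g n x assume fg: "f \<in> cochains K G p" "g \<in> cochains K G p" "r f = r g"
    show "f n x = g n x"
    proof (cases "x \<in> K n")
      case True
      then have "(n, x) \<in> I" unfolding I_def by auto
      then show ?thesis using fun_cong[OF fg(3), of "(n, x)"] by (simp add: r_def)
    qed (use fg(1,2) in \<open>simp add: cochains_def\<close>)
  qed
  moreover have "r ` cochains K G p \<subseteq> PiE I (\<lambda>(n, x). G (n - p))"
  proof (rule image_subsetI)
    fix f assume "f \<in> cochains K G p"
    then have "\<forall>n x. x \<in> K n \<longrightarrow> f n x \<in> G (n - p)" by (simp add: cochains_def)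
    then show "r f \<in> PiE I (\<lambda>(n, x). G (n - p))" by (auto simp: r_def I_def PiE_iff)
  qed
  moreover have "finite (PiE I (\<lambda>(n, x). G (n - p)))"
    using assms unfolding I_def by (intro finite_PiE finite_SigmaI) auto
  ultimately show ?thesis by (metis finite_imageD finite_subset)
qed

lemma add_subgroup_cochains:
  assumes "\<And>n. add_subgroup (G n)"
  shows "add_subgroup (cochains K G p)"
  using assms by (auto simp: add_subgroup_def cochains_def)

lemma delta_add:
  assumes dG_add: "\<And>n a b. a \<in> G n \<Longrightarrow> b \<in> G n \<Longrightarrow> dG n (a + b) = dG n a + dG n b"
    and f: "f \<in> cochains K G p" and g: "g \<in> cochains K G p"
  shows "delta K dC dG p (f + g) = delta K dC dG p f + delta K dC dG p g"
proof (intro ext)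
  fix n x
  show "delta K dC dG p (f + g) n x = (delta K dC dG p f + delta K dC dG p g) n x"
  proof (cases "x \<in> K n")
    case True
    then have "f n x \<in> G (n - p)" "g n x \<in> G (n - p)" using f g by (auto simp: cochains_def)
    then show ?thesis using True
      by (simp add: delta_def zmul_plus sum.distrib dG_add algebra_simps)
  qed (simp add: delta_def)
qed

lemma delta_in_cochains:
  assumes G: "\<And>n. add_subgroup (G n)" and dG_maps: "\<And>n a. a \<in> G n \<Longrightarrow> dG n a \<in> G (n - 1)"
    and f: "f \<in> cochains K G p"
  shows "delta K dC dG p f \<in> cochains K G (p + 1)"
proof -
  have "delta K dC dG p f n x \<in> G (n - (p + 1))" if x: "x \<in> K n" for n x
  proof -
    have "f (n - 1) y \<in> G (n - 1 - p)" if "y \<in> K (n - 1)" for y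
      using f that by (simp add: cochains_def)
    moreover have "n - 1 - p = n - (p + 1)" by simp
    ultimately have "f (n - 1) y \<in> G (n - (p + 1))" if "y \<in> K (n - 1)" for y
      using that by metis
    then have "(\<Sum>y\<in>K (n - 1). zmul (dC n x y) (f (n - 1) y)) \<in> G (n - (p + 1))"
      by (intro add_subgroup_sum[OF G] add_subgroup_zmul[OF G])
    moreover have "dG (n - p) (f n x) \<in> G (n - (p + 1))"
      using dG_maps f x by (force simp: cochains_def algebra_simps)
    ultimately show ?thesis
      using x add_subgroup_diff[OF G] add_subgroup_add[OF G] by (simp add: delta_def)
  qed
  then show ?thesis by (simp add: cochains_def delta_def)
qed

lemma add_subgroup_cocycles0:
  assumes G: "\<And>n. add_subgroup (G n)"
    and dG_add: "\<And>n a b. a \<in> G n \<Longrightarrow> b \<in> G n \<Longrightarrow> dG n (a + b) = dG n a + dG n b"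
  shows "add_subgroup (cocycles0 K dC G dG)"
proof -
  have "cocycles0 K dC G dG = {a \<in> cochains K G 0. delta K dC dG 0 a = 0}"
    by (simp add: cocycles0_def zero_fun_def)
  moreover have "add_subgroup {a \<in> cochains K G 0. delta K dC dG 0 a = 0}"
    using add_subgroup_cochains[OF G] by (rule add_subgroup_kernel) (use dG_add in \<open>rule delta_add\<close>)
  ultimately show ?thesis by simp
qed

lemma add_subgroup_coboundaries0:
  assumes G: "\<And>n. add_subgroup (G n)"
    and dG_add: "\<And>n a b. a \<in> G n \<Longrightarrow> b \<in> G n \<Longrightarrow> dG n (a + b) = dG n a + dG n b"
  shows "add_subgroup (coboundaries0 K dC G dG)"
  unfolding coboundaries0_def
  using add_subgroup_cochains[OF G] by (rule add_subgroup_image) (use dG_add in \<open>rule delta_add\<close>)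

lemma cls_eq_add_coset: "cls K dC G dG f = add_coset (coboundaries0 K dC G dG) f"
  by (auto simp: cls_def add_coset_def cadd_eq_plus)

lemma H0_chars_eq_coset_characters:
  "H0_chars K dC G dG = coset_characters (cocycles0 K dC G dG) (coboundaries0 K dC G dG)"
  by (simp add: H0_chars_def coset_characters_def character_on_def H0_def cls_eq_add_coset
      cadd_eq_plus)

lemma A0_ket_nonzero_imp:
  assumes "A0 K dC G dG (ket g) h \<noteq> 0"
  shows "\<exists>t\<in>cochains K G (-1). h = g + delta K dC dG (-1) t"
proof -
  have "(\<Sum>t\<in>cochains K G (-1). Pop (delta K dC dG (-1) t) (ket g) h) \<noteq> 0"
    using assms unfolding A0_def by auto
  then obtain t where "t \<in> cochains K G (-1)" "Pop (delta K dC dG (-1) t) (ket g) h \<noteq> 0"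
    by (rule sum.not_neutral_contains_not_neutral)
  then show ?thesis by (auto simp: Pop_def ket_def csub_eq_minus split: if_splits)
qed

lemma hom0_chars_plus:
  "m \<in> hom0_chars K G \<Longrightarrow> a \<in> cochains K G 0 \<Longrightarrow> b \<in> cochains K G 0 \<Longrightarrow> m (a + b) = m a * m b"
  unfolding hom0_chars_def cadd_eq_plus by blast

theorem proposition8:
  fixes K :: "int \<Rightarrow> 'c set" and dC :: "int \<Rightarrow> 'c \<Rightarrow> 'c \<Rightarrow> int"
    and G :: "int \<Rightarrow> 'g::ab_group_add set" and dG :: "int \<Rightarrow> 'g \<Rightarrow> 'g"
    and mrho :: "(('c, 'g) cochain set \<Rightarrow> complex) \<Rightarrow> ('c, 'g) cochain \<Rightarrow> complex"
    and f g :: "('c, 'g) cochain"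
  assumes K_fin: "\<And>n. finite (K n)"
    and K_supp: "finite {n. K n \<noteq> {}}"
    and C_chain: "\<And>n x z. x \<in> K n \<Longrightarrow> z \<in> K (n - 2) \<Longrightarrow>
                    (\<Sum>y\<in>K (n - 1). dC n x y * dC (n - 1) y z) = 0"
    and G_fin: "\<And>n. finite (G n)"
    and G_zero: "\<And>n. 0 \<in> G n"
    and G_add: "\<And>n a b. a \<in> G n \<Longrightarrow> b \<in> G n \<Longrightarrow> a + b \<in> G n"
    and G_uminus: "\<And>n a. a \<in> G n \<Longrightarrow> - a \<in> G n"
    and dG_maps: "\<And>n a. a \<in> G n \<Longrightarrow> dG n a \<in> G (n - 1)"
    and dG_add: "\<And>n a b. a \<in> G n \<Longrightarrow> b \<in> G n \<Longrightarrow> dG n (a + b) = dG n a + dG n b"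
    and G_chain: "\<And>n a. a \<in> G n \<Longrightarrow> dG (n - 1) (dG n a) = 0"
    and mrho: "\<And>\<rho>. \<rho> \<in> H0_chars K dC G dG \<Longrightarrow>
                 mrho \<rho> \<in> hom0_chars K G
               \<and> (\<forall>t\<in>cochains K G (-1). mrho \<rho> (delta K dC dG (-1) t) = 1)
               \<and> (\<forall>h\<in>cocycles0 K dC G dG. mrho \<rho> h = \<rho> (cls K dC G dG h))"
    and f: "f \<in> cocycles0 K dC G dG"
    and g: "g \<in> cocycles0 K dC G dG"
  shows "Qclass K dC G dG mrho f (A0 K dC G dG (ket g))
       = (\<lambda>h. (if cls K dC G dG f = cls K dC G dG g then 1 else 0) * A0 K dC G dG (ket g) h)"
proof -
  define Z where "Z = cocycles0 K dC G dG"
  define B where "B = coboundaries0 K dC G dG"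
  define X where "X = coset_characters Z B"
  define \<psi> where "\<psi> = A0 K dC G dG (ket g)"
  have G: "add_subgroup (G n)" for n
    using G_zero G_add G_uminus by (simp add: add_subgroup_def)
  have Z: "add_subgroup Z" unfolding Z_def using G dG_add by (rule add_subgroup_cocycles0)
  have B: "add_subgroup B" unfolding B_def using G dG_add by (rule add_subgroup_coboundaries0)
  have "finite (cochains K G 0)" using K_fin K_supp G_fin by (rule finite_cochains)
  then have "finite Z" unfolding Z_def cocycles0_def by (rule finite_subset[rotated]) blast
  have fg: "f \<in> Z" "g \<in> Z" using f g unfolding Z_def .
  have chars: "H0_chars K dC G dG = X" and classes: "cls K dC G dG = add_coset B"
    unfolding X_def Z_def B_def
    by (simp_all add: H0_chars_eq_coset_characters cls_eq_add_coset fun_eq_iff)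
  have mrho_support: "mrho \<rho> h = \<rho> (add_coset B g)" if \<rho>: "\<rho> \<in> X" and h: "\<psi> h \<noteq> 0" for \<rho> h
  proof -
    obtain t where t: "t \<in> cochains K G (-1)" "h = g + delta K dC dG (-1) t"
      using A0_ket_nonzero_imp h unfolding \<psi>_def by blast
    have m: "mrho \<rho> \<in> hom0_chars K G" "mrho \<rho> (delta K dC dG (-1) t) = 1"
      "mrho \<rho> g = \<rho> (add_coset B g)"
      using mrho[of \<rho>] \<rho> t(1) g by (simp_all add: chars classes)
    have "delta K dC dG (-1) t \<in> cochains K G 0" using delta_in_cochains[OF G dG_maps t(1)] by simp
    moreover have "g \<in> cochains K G 0" using g by (simp add: cocycles0_def)
    ultimately show ?thesis using hom0_chars_plus[OF m(1)] m(2,3) t(2) by simp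
  qed
  have "Qclass K dC G dG mrho f \<psi> h
      = (\<Sum>\<rho>\<in>X. cnj (\<rho> (add_coset B f)) * \<rho> (add_coset B g)) * \<psi> h / of_nat (card X)" for h
    by (cases "\<psi> h = 0")
      (simp_all add: Qclass_def Qop_def chars classes sum_distrib_left mrho_support mult_ac)
  moreover have "card X \<noteq> 0"
    using finite_coset_characters[OF \<open>finite Z\<close> Z] coset_characters_nonempty[OF Z]
    unfolding X_def by simp
  ultimately show ?thesis
    using coset_characters_orthogonal[OF \<open>finite Z\<close> Z B fg]
    unfolding \<psi>_def X_def classes by (simp add: fun_eq_iff)
qed

end
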